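(* Let $\vec p,\vec s$ be $n$-tuples with entries in $[1,\infty]$ and $\alpha$ be such that $\frac1n\sum_{i=1}^n\frac1{s_i}\le\frac1\alpha\le\frac1n\sum_{i=1}^n\frac1{p_i}$. Then $(L^{\vec p\,'},\ell^{\vec s\,'})(\mathbb R^n)$ is a dense subspace of $\mathcal H(\vec p\,',\vec s\,',\alpha')$.
   Context: For $\vec p=(p_1,\dots,p_n)$ with $1\le p_i\le\infty$, $\|f\|_{L^{\vec p}}=\Big(\int_{\mathbb R}\cdots\Big(\int_{\mathbb R}|f(x)|^{p_1}\,dx_1\Big)^{p_2/p_1}\cdots dx_n\Big)^{1/p_n}$ (usual modification when some $p_i=\infty$); primes denote conjugate exponents componentwise ($1/p_i+1/p_i'=1$, $1/\alpha+1/\alpha'=1$). For $k\in\mathbb Z^n$, $Q_{1,k}=k+[0,1)^n$; for a sequence $\{a_k\}_{k\in\mathbb Z^n}$, $\|\{a_k\}\|_{\ell^{\vec s}}=\Big(\sum_{k_n}\cdots\Big(\sum_{k_1}|a_k|^{s_1}\Big)^{s_2/s_1}\cdots\Big)^{1/s_n}$. $(L^{\vec p\,'},\ell^{\vec s\,'})(\mathbb R^n)$ is the set of $f\in L^1_{loc}$ with $\|f\|_{\vec p\,',\vec s\,'}:=\big\|\{\|f\chi_{Q_{1,k}}\|_{L^{\vec p\,'}}\}_k\big\|_{\ell^{\vec s\,'}}<\infty$. For $r>0$ the dilation $St^{(\alpha')}_r$ is $St^{(\alpha')}_r f(x)=r^{-n/\alpha'}f(x/r)$. The space $\mathcal H(\vec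 p\,',\vec s\,',\alpha')$ is the set of $f\in L^1_{loc}(\mathbb R^n)$ for which there is a sequence $\{(c_j,r_j,f_j)\}_{j\ge1}\subset\mathbb C\times(0,\infty)\times(L^{\vec p\,'},\ell^{\vec s\,'})(\mathbb R^n)$ (a block decomposition of $f$) with $f=\sum_{j\ge1}c_jSt^{(\alpha')}_{r_j}(f_j)$ in $L^1_{loc}(\mathbb R^n)$, $\|f_j\|_{\vec p\,',\vec s\,'}\le1$ for all $j$, and $\sum_j|c_j|<\infty$; its norm is $\|f\|_{\mathcal H(\vec p\,',\vec s\,',\alpha')}=\inf\sum_{j\ge1}|c_j|$, the infimum over all block decompositions of $f$. *)

theory Defs
  imports "HOL-Analysis.Analysis" "HOL-Probability.Essential_Supremum"
begin

definition conj_exp :: "ennreal \<Rightarrow> ennreal" where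
  "conj_exp p = inverse (1 - inverse p)"   (* 1/p + 1/p' = 1; conj 1 = \<infinity>, conj \<infinity> = 1 *)

definition epowr :: "ennreal \<Rightarrow> real \<Rightarrow> ennreal" where
  "epowr x a = (if x = \<infinity> then \<infinity> else ennreal (enn2real x powr a))"

definition lp_norm :: "'a measure \<Rightarrow> ennreal \<Rightarrow> ('a \<Rightarrow> ennreal) \<Rightarrow> ennreal" where
  "lp_norm M p g =
     (if p = \<infinity> then esssup M g
      else epowr (\<integral>\<^sup>+ x. epowr (g x) (enn2real p) \<partial>M) (1 / enn2real p))"

section \<open>Iterated (mixed) norms; coordinate 0 is the innermost one (x_1 in the paper)\<close>

text \<open>Points of the n-dimensional space are functions nat => 'a that are undefined
  outside {..<n} (the convention of PiM / PiE).\<close>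

primrec mixed_aux ::
  "'a measure \<Rightarrow> (nat \<Rightarrow> ennreal) \<Rightarrow> nat \<Rightarrow> ((nat \<Rightarrow> 'a) \<Rightarrow> ennreal) \<Rightarrow> (nat \<Rightarrow> 'a) \<Rightarrow> ennreal" where
  "mixed_aux M p 0 g = g"
| "mixed_aux M p (Suc k) g = (\<lambda>x. lp_norm M (p k) (\<lambda>t. mixed_aux M p k g (x(k := t))))"

definition mixed_norm ::
  "'a measure \<Rightarrow> (nat \<Rightarrow> ennreal) \<Rightarrow> nat \<Rightarrow> ((nat \<Rightarrow> 'a) \<Rightarrow> ennreal) \<Rightarrow> ennreal" where
  "mixed_norm M p n g = mixed_aux M p n g (\<lambda>_. undefined)"

abbreviation Rn :: "nat \<Rightarrow> (nat \<Rightarrow> real) measure" where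
  "Rn n \<equiv> PiM {..<n} (\<lambda>_. lborel)"

definition Lmixed_norm :: "nat \<Rightarrow> (nat \<Rightarrow> ennreal) \<Rightarrow> ((nat \<Rightarrow> real) \<Rightarrow> complex) \<Rightarrow> ennreal" where
  "Lmixed_norm n p f = mixed_norm lborel p n (\<lambda>x. ennreal (cmod (f x)))"

definition cube :: "nat \<Rightarrow> (nat \<Rightarrow> int) \<Rightarrow> (nat \<Rightarrow> real) set" where
  "cube n k = {x \<in> space (Rn n). \<forall>i<n. real_of_int (k i) \<le> x i \<and> x i < real_of_int (k i) + 1}"

definition amalgam_norm ::
  "nat \<Rightarrow> (nat \<Rightarrow> ennreal) \<Rightarrow> (nat \<Rightarrow> ennreal) \<Rightarrow> ((nat \<Rightarrow> real) \<Rightarrow> complex) \<Rightarrow> ennreal" where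
  "amalgam_norm n p s f =
     mixed_norm (count_space UNIV) s n
       (\<lambda>k. Lmixed_norm n p (\<lambda>x. indicator (cube n k) x * f x))"

definition box_R :: "nat \<Rightarrow> real \<Rightarrow> (nat \<Rightarrow> real) set" where
  "box_R n R = {x \<in> space (Rn n). \<forall>i<n. \<bar>x i\<bar> \<le> R}"

definition loc_int :: "nat \<Rightarrow> ((nat \<Rightarrow> real) \<Rightarrow> complex) \<Rightarrow> bool" where
  "loc_int n f \<longleftrightarrow> (\<forall>R. set_integrable (Rn n) (box_R n R) f)"

definition amalgam :: "nat \<Rightarrow> (nat \<Rightarrow> ennreal) \<Rightarrow> (nat \<Rightarrow> ennreal) \<Rightarrow> ((nat \<Rightarrow> real) \<Rightarrow> complex) set" where
  "amalgam n p s = {f. loc_int n f \<and> amalgam_norm n p s f < \<infinity>}"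

definition dil :: "nat \<Rightarrow> ennreal \<Rightarrow> real \<Rightarrow> ((nat \<Rightarrow> real) \<Rightarrow> complex) \<Rightarrow> (nat \<Rightarrow> real) \<Rightarrow> complex" where
  "dil n a r f x = complex_of_real (r powr (- real n * enn2real (inverse a)))
                     * f (restrict (\<lambda>i. x i / r) {..<n})"

definition block_decomp ::
  "nat \<Rightarrow> (nat \<Rightarrow> ennreal) \<Rightarrow> (nat \<Rightarrow> ennreal) \<Rightarrow> ennreal \<Rightarrow> ((nat \<Rightarrow> real) \<Rightarrow> complex)
     \<Rightarrow> (nat \<Rightarrow> complex) \<Rightarrow> (nat \<Rightarrow> real) \<Rightarrow> (nat \<Rightarrow> (nat \<Rightarrow> real) \<Rightarrow> complex) \<Rightarrow> bool" where
  "block_decomp n p s a f c r g \<longleftrightarrow>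
     (\<forall>j. 0 < r j \<and> g j \<in> amalgam n p s \<and> amalgam_norm n p s (g j) \<le> 1)
     \<and> summable (\<lambda>j. cmod (c j))
     \<and> (\<forall>R. ((\<lambda>N. \<integral>\<^sup>+ x. indicator (box_R n R) x *
                 ennreal (cmod (f x - (\<Sum>j<N. c j * dil n a (r j) (g j) x))) \<partial>Rn n)
             \<longlongrightarrow> 0) sequentially)"

definition Hspace :: "nat \<Rightarrow> (nat \<Rightarrow> ennreal) \<Rightarrow> (nat \<Rightarrow> ennreal) \<Rightarrow> ennreal \<Rightarrow> ((nat \<Rightarrow> real) \<Rightarrow> complex) set" where
  "Hspace n p s a = {f. loc_int n f \<and> (\<exists>c r g. block_decomp n p s a f c r g)}"

definition Hnorm :: "nat \<Rightarrow> (nat \<Rightarrow> ennreal) \<Rightarrow> (nat \<Rightarrow> ennreal) \<Rightarrow> ennreal \<Rightarrow> ((nat \<Rightarrow> real) \<Rightarrow> complex) \<Rightarrow> real" where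
  "Hnorm n p s a f = Inf {(\<Sum>j. cmod (c j)) | c r g. block_decomp n p s a f c r g}"

end

(*
  The amalgam space A = (L^p', l^s') is a linear space because the iterated L^p and l^s norms
  are homogeneous and, by Minkowski's inequality in each variable, subadditive. Every f in A is a
  single block of H: f = M * (f / M) for any M > ||f||, and f / M lies in the unit ball of A.

  Density rests on the invariance of A under the dilations St_r. The dilated unit cube
  Q_k / r meets at most (ceil(1/r) + 1)^n unit cubes Q_j, and each j arises from at most
  ceil(r)^n indices k, so the amalgam norm of f(./r) is bounded by a constant (depending on n and r)
  times that of f. Hence the partial sums of a block decomposition of f lie in A, while the tail
  of the decomposition is a block decomposition of the remainder whose coefficient sum is
  arbitrarily small.

  Conjugate exponents are always >= 1.
*)
theory Submission
  imports Defs
begin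

section \<open>Powers of extended reals and one-dimensional \<open>L\<^sup>p\<close> norms\<close>

lemma epowr_top [simp]: "epowr top a = top"
  by (simp add: epowr_def)

lemma epowr_ennreal [simp]: "0 \<le> x \<Longrightarrow> epowr (ennreal x) a = ennreal (x powr a)"
  by (simp add: epowr_def)

lemma epowr_zero [simp]: "epowr 0 a = 0"
  by (simp add: epowr_def)

lemma epowr_one [simp]: "epowr x 1 = x"
  by (cases x rule: ennreal_cases) auto

lemma epowr_less_top: "x < top \<Longrightarrow> epowr x a < top"
  by (cases x rule: ennreal_cases) auto

lemma epowr_mono:
  assumes "x \<le> y" and "0 \<le> a"
  shows "epowr x a \<le> epowr y a"
proof (cases y rule: ennreal_cases)
  case (real r)
  with assms(1) obtain x' where "x = ennreal x'" "0 \<le> x'" "x' \<le> r"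
    by (cases x rule: ennreal_cases) (auto simp: top_unique)
  with real assms(2) show ?thesis
    by (simp add: powr_mono2)
qed simp

lemma epowr_mult:
  assumes "c < top"
  shows "epowr (c * x) a = epowr c a * epowr x a"
proof -
  obtain c' where c': "c = ennreal c'" "0 \<le> c'"
    using assms by (cases c rule: ennreal_cases) auto
  show ?thesis
  proof (cases x rule: ennreal_cases)
    case (real x')
    with c' show ?thesis
      by (simp add: powr_mult flip: ennreal_mult)
  next
    case top
    with c' show ?thesis
      by (cases "c' = 0") (auto simp: ennreal_mult_top)
  qed
qed

lemma epowr_epowr: "0 \<le> a \<Longrightarrow> epowr (epowr x a) b = epowr x (a * b)"
  by (cases x rule: ennreal_cases) (simp_all add: powr_powr)

lemma borel_measurable_epowr [measurable]: "(\<lambda>x. epowr x a) \<in> borel_measurable borel"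
  unfolding epowr_def by measurable

lemma borel_measurable_epowr' [measurable (raw)]:
  "f \<in> borel_measurable M \<Longrightarrow> (\<lambda>x. epowr (f x) a) \<in> borel_measurable M"
  using measurable_compose[OF _ borel_measurable_epowr] by blast

lemma convex_on_powr_nonneg:
  assumes q: "1 \<le> q"
  shows "convex_on {0..} (\<lambda>x::real. x powr q)"
proof
  fix t x y :: real
  assume t: "0 < t" "t < 1" and x: "x \<in> {0..}" and y: "y \<in> {0..}"
  have small: "c powr q * z powr q \<le> c * z powr q" if "0 \<le> c" "c \<le> 1" for c z :: real
    using that q powr_le_one_le[of c q] by (cases "c = 0") (auto intro: mult_right_mono)
  consider "x = 0" | "y = 0" | "0 < x" "0 < y"
    using x y by force
  then show "((1 - t) *\<^sub>R x + t *\<^sub>R y) powr q \<le> (1 - t) * x powr q + t * y powr q"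
  proof cases
    case 1
    then show ?thesis using t y small[of t y] by (simp add: powr_mult)
  next
    case 2
    then show ?thesis using t x small[of "1 - t" x] by (simp add: powr_mult)
  next
    case 3
    then show ?thesis
      using convex_onD[OF powr_convex[OF q], of t x y] t by simp
  qed
qed simp

text \<open>The pointwise inequality behind Minkowski's inequality: it is the convexity of
  \<open>t \<mapsto> t\<^sup>q\<close> at the point \<open>(u + v)/(A + B)\<close>, written as a convex combination of \<open>u/A\<close> and \<open>v/B\<close>.\<close>

lemma powr_add_le_weighted:
  fixes u v A B q :: real
  assumes "0 \<le> u" "0 \<le> v" "0 < A" "0 < B" "1 \<le> q"
  shows "(u + v) powr q \<le> (A + B) powr (q - 1) * (A powr (1 - q) * u powr q + B powr (1 - q) * v powr q)"
proof -
  define t where "t = B / (A + B)"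
  have t: "0 \<le> t" "t \<le> 1" "1 - t = A / (A + B)"
    using assms by (auto simp: t_def field_simps)
  have "(1 - t) * (u / A) = u / (A + B)"
    using assms unfolding t(3) by simp
  moreover have "t * (v / B) = v / (A + B)"
    using assms unfolding t_def by simp
  ultimately have eq: "(u + v) / (A + B) = (1 - t) * (u / A) + t * (v / B)"
    by (simp add: add_divide_distrib)
  have "((u + v) / (A + B)) powr q \<le> (1 - t) * (u / A) powr q + t * (v / B) powr q"
    using convex_onD[OF convex_on_powr_nonneg[OF \<open>1 \<le> q\<close>], of t "u / A" "v / B"] assms t
    by (simp add: eq)
  then have "(u + v) powr q \<le> (A + B) powr q * ((1 - t) * (u powr q / A powr q) + t * (v powr q / B powr q))"
    using assms by (simp add: powr_divide divide_le_eq mult.commute)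
  also have "\<dots> = (A + B) powr q / (A + B) * (A / A powr q * u powr q + B / B powr q * v powr q)"
    unfolding t(3) unfolding t_def by (simp add: divide_inverse algebra_simps)
  also have "\<dots> = (A + B) powr (q - 1) * (A powr (1 - q) * u powr q + B powr (1 - q) * v powr q)"
    using assms by (simp add: powr_diff)
  finally show ?thesis .
qed

lemma epowr_add_le_weighted:
  fixes u v :: ennreal and A B q :: real
  assumes A: "0 < A" and B: "0 < B" and q: "1 \<le> q"
  shows "epowr (u + v) q \<le> ennreal ((A + B) powr (q - 1)) *
            (ennreal (A powr (1 - q)) * epowr u q + ennreal (B powr (1 - q)) * epowr v q)"
proof (cases "u = top \<or> v = top")
  case True
  then show ?thesis
    using A B by (auto simp: ennreal_mult_top)
next
  case False
  then obtain u' v' where uv: "u = ennreal u'" "v = ennreal v'" "0 \<le> u'" "0 \<le> v'"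
    by (cases u rule: ennreal_cases; cases v rule: ennreal_cases) auto
  have "ennreal ((u' + v') powr q) \<le>
      ennreal ((A + B) powr (q - 1) * (A powr (1 - q) * u' powr q + B powr (1 - q) * v' powr q))"
    using powr_add_le_weighted[of u' v' A B q] uv A B q by (intro ennreal_leI) auto
  also have "\<dots> = ennreal ((A + B) powr (q - 1)) *
      (ennreal (A powr (1 - q)) * ennreal (u' powr q) + ennreal (B powr (1 - q)) * ennreal (v' powr q))"
    by (simp add: ennreal_mult)
  finally show ?thesis
    using uv by (simp flip: ennreal_plus)
qed

lemma nn_integral_epowr_add_le:
  fixes A B q :: real
  assumes A: "0 < A" and B: "0 < B" and q: "1 \<le> q"
    and [measurable]: "f \<in> borel_measurable M" "g \<in> borel_measurable M"
    and f: "(\<integral>\<^sup>+x. epowr (f x) q \<partial>M) \<le> ennreal (A powr q)"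
    and g: "(\<integral>\<^sup>+x. epowr (g x) q \<partial>M) \<le> ennreal (B powr q)"
  shows "(\<integral>\<^sup>+x. epowr (f x + g x) q \<partial>M) \<le> ennreal ((A + B) powr q)"
proof -
  define K \<alpha> \<beta> where "K = (A + B) powr (q - 1)" and "\<alpha> = A powr (1 - q)" and "\<beta> = B powr (1 - q)"
  have "(\<integral>\<^sup>+x. epowr (f x + g x) q \<partial>M)
      \<le> (\<integral>\<^sup>+x. ennreal K * (ennreal \<alpha> * epowr (f x) q + ennreal \<beta> * epowr (g x) q) \<partial>M)"
    unfolding K_def \<alpha>_def \<beta>_def by (intro nn_integral_mono epowr_add_le_weighted A B q)
  also have "\<dots> = ennreal K * (ennreal \<alpha> * (\<integral>\<^sup>+x. epowr (f x) q \<partial>M) + ennreal \<beta> * (\<integral>\<^sup>+x. epowr (g x) q \<partial>M))"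
    by (simp add: nn_integral_cmult nn_integral_add)
  also have "\<dots> \<le> ennreal K * (ennreal \<alpha> * ennreal (A powr q) + ennreal \<beta> * ennreal (B powr q))"
    using f g by (intro mult_left_mono add_mono) auto
  also have "\<dots> = ennreal (K * (\<alpha> * A powr q + \<beta> * B powr q))"
    by (simp add: K_def \<alpha>_def \<beta>_def ennreal_mult ennreal_plus)
  also have "K * (\<alpha> * A powr q + \<beta> * B powr q) = (A + B) powr q"
    using A B by (simp add: K_def \<alpha>_def \<beta>_def powr_diff flip: powr_add)
  finally show ?thesis .
qed

lemma lp_norm_finite:
  "p \<noteq> top \<Longrightarrow> lp_norm M p g = epowr (\<integral>\<^sup>+x. epowr (g x) (enn2real p) \<partial>M) (1 / enn2real p)"
  by (simp add: lp_norm_def)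

lemma lp_norm_top: "lp_norm M top g = esssup M g"
  by (simp add: lp_norm_def)

lemma enn2real_ge_1: "1 \<le> p \<Longrightarrow> p \<noteq> top \<Longrightarrow> 1 \<le> enn2real p"
  using enn2real_mono[of 1 p] by (simp add: top.not_eq_extremum)

lemma lp_norm_zero: "lp_norm M p (\<lambda>_. 0) = 0"
proof (cases "p = top")
  case True
  have "esssup M (\<lambda>_. 0 :: ennreal) \<le> 0"
    by (rule esssup_I) auto
  then show ?thesis using True by (simp add: lp_norm_top)
qed (simp add: lp_norm_finite)

lemma lp_norm_mono:
  assumes p: "1 \<le> p" and f: "f \<in> borel_measurable M" and le: "\<And>t. t \<in> space M \<Longrightarrow> f t \<le> g t"
  shows "lp_norm M p f \<le> lp_norm M p g"
proof (cases "p = top")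
  case True
  then show ?thesis using f le by (simp add: lp_norm_top esssup_AE_mono AE_I2)
next
  case False
  then have q: "1 \<le> enn2real p" using p by (rule enn2real_ge_1[rotated])
  have "(\<integral>\<^sup>+x. epowr (f x) (enn2real p) \<partial>M) \<le> (\<integral>\<^sup>+x. epowr (g x) (enn2real p) \<partial>M)"
    using q le by (intro nn_integral_mono epowr_mono) auto
  then show ?thesis
    unfolding lp_norm_finite[OF False] using q by (intro epowr_mono) auto
qed

lemma lp_norm_cmult:
  assumes p: "1 \<le> p" and [measurable]: "f \<in> borel_measurable M" and c: "c < top"
  shows "lp_norm M p (\<lambda>t. c * f t) \<le> c * lp_norm M p f"
proof (cases "p = top")
  case True
  have "AE t in M. c * f t \<le> c * esssup M f"
    using esssup_AE[of f M] by eventually_elim (rule mult_left_mono, auto)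
  then show ?thesis using True by (simp add: lp_norm_top esssup_I)
next
  case False
  define q where "q = enn2real p"
  have q: "1 \<le> q" using enn2real_ge_1[OF p False] by (simp add: q_def)
  have "(\<integral>\<^sup>+x. epowr (c * f x) q \<partial>M) = epowr c q * (\<integral>\<^sup>+x. epowr (f x) q \<partial>M)"
    using c by (simp add: epowr_mult nn_integral_cmult)
  moreover have "epowr (epowr c q * I) (1 / q) = c * epowr I (1 / q)" for I
    using c q by (subst epowr_mult) (simp_all add: epowr_less_top epowr_epowr)
  ultimately show ?thesis
    unfolding lp_norm_finite[OF False] q_def[symmetric] by simp
qed

lemma lp_norm_add:
  assumes p: "1 \<le> p" and [measurable]: "f \<in> borel_measurable M" "g \<in> borel_measurable M"
  shows "lp_norm M p (\<lambda>t. f t + g t) \<le> lp_norm M p f + lp_norm M p g"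
proof (cases "p = top")
  case True
  have "AE t in M. f t + g t \<le> esssup M f + esssup M g"
    using esssup_AE[of f M] esssup_AE[of g M] by eventually_elim (rule add_mono)
  then show ?thesis using True by (simp add: lp_norm_top esssup_I)
next
  case False
  define q where "q = enn2real p"
  have q: "1 \<le> q" using enn2real_ge_1[OF p False] by (simp add: q_def)
  have norm: "lp_norm M p h = epowr (\<integral>\<^sup>+x. epowr (h x) q \<partial>M) (1 / q)" for h
    unfolding lp_norm_finite[OF False] q_def ..
  have integral: "(\<integral>\<^sup>+x. epowr (h x) q \<partial>M) = epowr (lp_norm M p h) q" for h
    using q by (simp add: norm epowr_epowr)
  show ?thesis
  proof (cases "lp_norm M p f = top \<or> lp_norm M p g = top")
    case False
    then obtain a b where ab: "lp_norm M p f = ennreal a" "lp_norm M p g = ennreal b" "0 \<le> a" "0 \<le> b"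
      by (cases "lp_norm M p f" rule: ennreal_cases; cases "lp_norm M p g" rule: ennreal_cases) auto
    show ?thesis
      unfolding ab(1,2) ennreal_plus[OF ab(3,4), symmetric]
    proof (rule ennreal_le_epsilon)
      fix e :: real assume e: "0 < e"
      define A B where "A = a + e / 2" and "B = b + e / 2"
      have AB: "0 < A" "0 < B" using ab e by (auto simp: A_def B_def)
      have "(\<integral>\<^sup>+x. epowr (f x + g x) q \<partial>M) \<le> ennreal ((A + B) powr q)"
        using ab e q by (intro nn_integral_epowr_add_le AB q) (auto simp: integral A_def B_def powr_mono2)
      then have "lp_norm M p (\<lambda>t. f t + g t) \<le> epowr (ennreal ((A + B) powr q)) (1 / q)"
        unfolding norm using q by (intro epowr_mono) auto
      also have "\<dots> = ennreal (a + b) + ennreal e"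
        using AB q ab e by (simp add: powr_powr A_def B_def flip: ennreal_plus)
      finally show "lp_norm M p (\<lambda>t. f t + g t) \<le> ennreal (a + b) + ennreal e" .
    qed
  qed auto
qed

text \<open>Measurability of an essential supremum depending on a parameter: over the rationals, the
  supremum becomes a countable one of functions built from the measures of the super-level sets.\<close>

lemma esssup_eq_SUP_rat:
  fixes h :: "'a \<Rightarrow> ennreal"
  assumes h[measurable]: "h \<in> borel_measurable M"
  shows "esssup M h = (SUP q\<in>(UNIV::rat set). if emeasure M {t \<in> space M. h t > ennreal (real_of_rat q)} \<noteq> 0
                         then ennreal (real_of_rat q) else 0)" (is "_ = ?S")
proof (rule antisym)
  show "esssup M h \<le> ?S"
  proof (rule ccontr)
    assume "\<not> esssup M h \<le> ?S"
    then obtain r :: rat where r: "?S < ennreal (real_of_rat r)" "ennreal (real_of_rat r) < esssup M h"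
      using ennreal_rat_dense by (meson not_le)
    have "emeasure M {t \<in> space M. h t > ennreal (real_of_rat r)} > 0"
      using esssup_pos_measure[OF h r(2)] .
    then have "ennreal (real_of_rat r) \<le> ?S"
      by (intro SUP_upper2[of r]) auto
    then show False using r(1) by simp
  qed
next
  show "?S \<le> esssup M h"
  proof (rule SUP_least)
    fix q :: rat
    have "emeasure M {t \<in> space M. h t > ennreal (real_of_rat q)} = 0"
      if "\<not> ennreal (real_of_rat q) \<le> esssup M h"
    proof -
      have "emeasure M {t \<in> space M. h t > ennreal (real_of_rat q)} \<le> emeasure M {t \<in> space M. h t > esssup M h}"
        using that by (intro emeasure_mono) auto
      then show ?thesis using esssup_zero_measure[of M h] by simp
    qed
    then show "(if emeasure M {t \<in> space M. h t > ennreal (real_of_rat q)} \<noteq> 0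
            then ennreal (real_of_rat q) else 0) \<le> esssup M h"
      by auto
  qed
qed

lemma borel_measurable_esssup_param:
  fixes F :: "'b \<Rightarrow> 'a \<Rightarrow> ennreal"
  assumes M: "sigma_finite_measure M"
    and F[measurable]: "(\<lambda>(x, t). F x t) \<in> borel_measurable (N \<Otimes>\<^sub>M M)"
  shows "(\<lambda>x. esssup M (F x)) \<in> borel_measurable N"
proof -
  have emeasure_level: "(\<lambda>x. emeasure M {t \<in> space M. F x t > c}) \<in> borel_measurable N" for c
  proof -
    define Q where "Q = {xt \<in> space (N \<Otimes>\<^sub>M M). (\<lambda>(x, t). F x t) xt > c}"
    have "Q \<in> sets (N \<Otimes>\<^sub>M M)" unfolding Q_def by measurable
    then have "(\<lambda>x. emeasure M (Pair x -` Q)) \<in> borel_measurable N"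
      by (rule sigma_finite_measure.measurable_emeasure_Pair[OF M])
    moreover have "Pair x -` Q = {t \<in> space M. F x t > c}" if "x \<in> space N" for x
      using that by (auto simp: Q_def space_pair_measure)
    ultimately show ?thesis by (simp cong: measurable_cong)
  qed
  have "(\<lambda>x. SUP q\<in>(UNIV::rat set). if emeasure M {t \<in> space M. F x t > ennreal (real_of_rat q)} \<noteq> 0
                         then ennreal (real_of_rat q) else 0) \<in> borel_measurable N"
    using emeasure_level by measurable
  moreover have "F x \<in> borel_measurable M" if "x \<in> space N" for x
    using measurable_Pair2[OF F that] by simp
  ultimately show ?thesis
    by (simp add: esssup_eq_SUP_rat cong: measurable_cong)
qed

lemma borel_measurable_lp_norm_param:
  fixes F :: "'b \<Rightarrow> 'a \<Rightarrow> ennreal"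
  assumes M: "sigma_finite_measure M"
    and F[measurable]: "(\<lambda>(x, t). F x t) \<in> borel_measurable (N \<Otimes>\<^sub>M M)"
  shows "(\<lambda>x. lp_norm M p (F x)) \<in> borel_measurable N"
proof (cases "p = top")
  case True
  then show ?thesis using borel_measurable_esssup_param[OF M F] by (simp add: lp_norm_top)
next
  case False
  have "(\<lambda>(x, t). epowr (F x t) (enn2real p)) \<in> borel_measurable (N \<Otimes>\<^sub>M M)"
    using borel_measurable_epowr'[OF F] by (simp add: case_prod_beta')
  then have "(\<lambda>x. \<integral>\<^sup>+t. epowr (F x t) (enn2real p) \<partial>M) \<in> borel_measurable N"
    by (rule sigma_finite_measure.borel_measurable_nn_integral[OF M])
  then show ?thesis unfolding lp_norm_finite[OF False] by measurable
qed

lemma epowr_one_over_le_max_1: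
  assumes "0 < r" and "1 \<le> q"
  shows "epowr (ennreal r) (1 / q) \<le> ennreal (max 1 r)"
proof (cases "r \<le> 1")
  case True
  then have "r powr (1 / q) \<le> 1 powr (1 / q)" using assms by (intro powr_mono2) auto
  then show ?thesis using assms by (simp add: ennreal_leI)
next
  case False
  then have "r powr (1 / q) \<le> r powr 1" using assms by (intro powr_mono) auto
  then show ?thesis using assms False by (simp add: ennreal_leI)
qed

lemma le_max_1_mult: "x \<le> ennreal (max 1 r) * (x :: ennreal)"
  using mult_right_mono[of 1 "ennreal (max 1 r)" x] by (simp add: ennreal_ge_1)

text \<open>The exact factors in the next two bounds are \<open>r\<^bsup>1/p\<^esup>\<close> and \<open>m\<^bsup>1/p\<^esup>\<close>; bounds uniform in \<open>p\<close>
  are all the dilation argument needs.\<close>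

lemma lp_norm_lborel_dilate_le:
  assumes p: "1 \<le> p" and r: "0 < r" and [measurable]: "\<phi> \<in> borel_measurable lborel"
  shows "lp_norm lborel p (\<lambda>t. \<phi> (t / r)) \<le> ennreal (max 1 r) * lp_norm lborel p \<phi>"
proof (cases "p = top")
  case True
  have "AE x in lborel. \<phi> x \<le> esssup lborel \<phi>" by (rule esssup_AE)
  then have "AE x in lborel. \<phi> (0 + (1 / r) * x) \<le> esssup lborel \<phi>"
    using r by (intro AE_borel_affine) auto
  then have "esssup lborel (\<lambda>t. \<phi> (t / r)) \<le> esssup lborel \<phi>"
    by (intro esssup_I) auto
  then show ?thesis
    using True le_max_1_mult order_trans by (fastforce simp: lp_norm_top)
next
  case False
  define q where "q = enn2real p"
  have q: "1 \<le> q" using enn2real_ge_1[OF p False] by (simp add: q_def)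
  have "(\<integral>\<^sup>+t. epowr (\<phi> (t / r)) q \<partial>lborel) = \<bar>r\<bar> * (\<integral>\<^sup>+x. epowr (\<phi> ((0 + r * x) / r)) q \<partial>lborel)"
    using r by (intro nn_integral_real_affine[where f = "\<lambda>t. epowr (\<phi> (t / r)) q"]) auto
  also have "\<dots> = ennreal r * (\<integral>\<^sup>+x. epowr (\<phi> x) q \<partial>lborel)"
    using r by simp
  finally have "lp_norm lborel p (\<lambda>t. \<phi> (t / r)) = epowr (ennreal r) (1 / q) * lp_norm lborel p \<phi>"
    unfolding lp_norm_finite[OF False] q_def[symmetric] by (simp add: epowr_mult)
  also have "\<dots> \<le> ennreal (max 1 r) * lp_norm lborel p \<phi>"
    using r q by (intro mult_right_mono epowr_one_over_le_max_1) auto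
  finally show ?thesis .
qed

lemma nn_integral_count_space_compose_le:
  fixes \<psi> :: "'a::countable \<Rightarrow> 'b::countable" and g :: "'b \<Rightarrow> ennreal"
  assumes fibres: "\<And>j. finite {t. \<psi> t = j} \<and> card {t. \<psi> t = j} \<le> m"
  shows "(\<integral>\<^sup>+t. g (\<psi> t) \<partial>count_space UNIV) \<le> of_nat m * (\<integral>\<^sup>+j. g j \<partial>count_space UNIV)"
proof -
  have "g (\<psi> t) = (\<integral>\<^sup>+j. g j * indicator {t'. \<psi> t' = j} t \<partial>count_space UNIV)" for t
    by (subst nn_integral_count_space'[where A = "{\<psi> t}"]) auto
  then have "(\<integral>\<^sup>+t. g (\<psi> t) \<partial>count_space UNIV) =
      (\<integral>\<^sup>+t. (\<integral>\<^sup>+j. g j * indicator {t'. \<psi> t' = j} t \<partial>count_space UNIV) \<partial>count_space UNIV)"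
    by simp
  also have "\<dots> = (\<integral>\<^sup>+j. g j * emeasure (count_space UNIV) {t'. \<psi> t' = j} \<partial>count_space UNIV)"
    by (subst nn_integral_count_space_nn_integral) (simp_all add: nn_integral_cmult_indicator)
  also have "\<dots> \<le> (\<integral>\<^sup>+j. of_nat m * g j \<partial>count_space UNIV)"
  proof (intro nn_integral_mono)
    fix j
    have "emeasure (count_space UNIV) {t'. \<psi> t' = j} \<le> of_nat m"
      using fibres[of j] by (simp add: emeasure_count_space_finite)
    then show "g j * emeasure (count_space UNIV) {t'. \<psi> t' = j} \<le> of_nat m * g j"
      by (subst mult.commute) (rule mult_right_mono, simp_all)
  qed
  also have "\<dots> = of_nat m * (\<integral>\<^sup>+j. g j \<partial>count_space UNIV)"
    by (rule nn_integral_cmult) auto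
  finally show ?thesis .
qed

lemma lp_norm_count_space_compose_le:
  fixes \<psi> :: "'a::countable \<Rightarrow> 'b::countable" and \<phi> :: "'b \<Rightarrow> ennreal"
  assumes p: "1 \<le> p" and m: "1 \<le> m" and fibres: "\<And>j. finite {t. \<psi> t = j} \<and> card {t. \<psi> t = j} \<le> m"
  shows "lp_norm (count_space UNIV) p (\<lambda>t. \<phi> (\<psi> t)) \<le> ennreal (max 1 (real m)) * lp_norm (count_space UNIV) p \<phi>"
proof (cases "p = top")
  case True
  have "esssup (count_space UNIV) (\<lambda>t. \<phi> (\<psi> t)) \<le> esssup (count_space UNIV) \<phi>"
    using esssup_AE[of \<phi> "count_space UNIV"] by (intro esssup_I) (auto simp: AE_count_space)
  then show ?thesis
    using True le_max_1_mult order_trans by (fastforce simp: lp_norm_top)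
next
  case False
  define q where "q = enn2real p"
  have q: "1 \<le> q" using enn2real_ge_1[OF p False] by (simp add: q_def)
  have "lp_norm (count_space UNIV) p (\<lambda>t. \<phi> (\<psi> t))
      \<le> epowr (of_nat m * (\<integral>\<^sup>+j. epowr (\<phi> j) q \<partial>count_space UNIV)) (1 / q)"
    unfolding lp_norm_finite[OF False] q_def[symmetric]
    using q by (intro epowr_mono nn_integral_count_space_compose_le fibres) auto
  also have "\<dots> = epowr (ennreal (real m)) (1 / q) * lp_norm (count_space UNIV) p \<phi>"
    unfolding lp_norm_finite[OF False] q_def[symmetric]
    by (subst epowr_mult) (auto simp: ennreal_of_nat_eq_real_of_nat)
  also have "\<dots> \<le> ennreal (max 1 (real m)) * lp_norm (count_space UNIV) p \<phi>"
    using m q by (intro mult_right_mono epowr_one_over_le_max_1) auto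
  finally show ?thesis .
qed

section \<open>Mixed norms\<close>

text \<open>The iterated norms are only monotone and subadditive when every inner norm is a measurable
  function of the coordinate that the next norm integrates over.\<close>

definition mixed_sections_measurable ::
  "'a measure \<Rightarrow> (nat \<Rightarrow> ennreal) \<Rightarrow> nat \<Rightarrow> ((nat \<Rightarrow> 'a) \<Rightarrow> ennreal) \<Rightarrow> bool" where
  "mixed_sections_measurable M p n g \<longleftrightarrow> (\<forall>k<n. \<forall>x\<in>space (PiM {..<n} (\<lambda>_. M)).
      (\<lambda>t. mixed_aux M p k g (x(k := t))) \<in> borel_measurable M)"

lemma fun_upd_in_space_PiM:
  "x \<in> space (PiM {..<n} (\<lambda>_. M)) \<Longrightarrow> k < n \<Longrightarrow> t \<in> space M \<Longrightarrow> x(k := t) \<in> space (PiM {..<n} (\<lambda>_. M))"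
  by (auto simp: space_PiM PiE_iff extensional_def)

lemma undefined_in_space_PiM: "space M = UNIV \<Longrightarrow> (\<lambda>_. undefined) \<in> space (PiM {..<n} (\<lambda>_. M))"
  by (auto simp: space_PiM PiE_iff extensional_def)

lemma mixed_aux_cong:
  "(\<And>i. k \<le> i \<Longrightarrow> x i = y i) \<Longrightarrow> mixed_aux M p k g x = mixed_aux M p k g y"
proof (induction k arbitrary: x y)
  case 0
  then have "x = y" by auto
  then show ?case by simp
next
  case (Suc k)
  have "mixed_aux M p k g (x(k := t)) = mixed_aux M p k g (y(k := t))" for t
    by (rule Suc.IH) (use Suc.prems in auto)
  then show ?case by simp
qed

lemma mixed_aux_zero: "mixed_aux M p k (\<lambda>_. 0) x = 0"
  by (induction k arbitrary: x) (simp_all add: lp_norm_zero)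

lemma mixed_norm_zero: "mixed_norm M p n (\<lambda>_. 0) = 0"
  by (simp add: mixed_norm_def mixed_aux_zero)

lemma mixed_aux_mono:
  assumes p: "\<forall>i<n. 1 \<le> p i" and g: "mixed_sections_measurable M p n g"
    and le: "\<And>x. x \<in> space (PiM {..<n} (\<lambda>_. M)) \<Longrightarrow> g x \<le> h x"
  shows "k \<le> n \<Longrightarrow> x \<in> space (PiM {..<n} (\<lambda>_. M)) \<Longrightarrow> mixed_aux M p k g x \<le> mixed_aux M p k h x"
proof (induction k arbitrary: x)
  case (Suc k)
  then have k: "k < n" and x: "x \<in> space (PiM {..<n} (\<lambda>_. M))" by auto
  have "lp_norm M (p k) (\<lambda>t. mixed_aux M p k g (x(k := t))) \<le> lp_norm M (p k) (\<lambda>t. mixed_aux M p k h (x(k := t)))"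
  proof (rule lp_norm_mono)
    fix t assume "t \<in> space M"
    then show "mixed_aux M p k g (x(k := t)) \<le> mixed_aux M p k h (x(k := t))"
      using k by (intro Suc.IH fun_upd_in_space_PiM[OF x k]) auto
  qed (use p g k x in \<open>auto simp: mixed_sections_measurable_def\<close>)
  then show ?case by simp
qed (simp add: le)

lemma mixed_aux_cmult_le:
  assumes p: "\<forall>i<n. 1 \<le> p i" and c: "c < top" and g: "mixed_sections_measurable M p n g"
    and cg: "mixed_sections_measurable M p n (\<lambda>x. c * g x)"
  shows "k \<le> n \<Longrightarrow> x \<in> space (PiM {..<n} (\<lambda>_. M)) \<Longrightarrow> mixed_aux M p k (\<lambda>x. c * g x) x \<le> c * mixed_aux M p k g x"
proof (induction k arbitrary: x)
  case (Suc k)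
  then have k: "k < n" and x: "x \<in> space (PiM {..<n} (\<lambda>_. M))" by auto
  have "lp_norm M (p k) (\<lambda>t. mixed_aux M p k (\<lambda>x. c * g x) (x(k := t)))
      \<le> lp_norm M (p k) (\<lambda>t. c * mixed_aux M p k g (x(k := t)))"
  proof (rule lp_norm_mono)
    fix t assume "t \<in> space M"
    then show "mixed_aux M p k (\<lambda>x. c * g x) (x(k := t)) \<le> c * mixed_aux M p k g (x(k := t))"
      using k by (intro Suc.IH fun_upd_in_space_PiM[OF x k]) auto
  qed (use p cg k x in \<open>auto simp: mixed_sections_measurable_def\<close>)
  also have "\<dots> \<le> c * lp_norm M (p k) (\<lambda>t. mixed_aux M p k g (x(k := t)))"
    using p g k x c by (intro lp_norm_cmult) (auto simp: mixed_sections_measurable_def)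
  finally show ?case by simp
qed simp

lemma mixed_aux_add_le:
  assumes p: "\<forall>i<n. 1 \<le> p i" and g: "mixed_sections_measurable M p n g"
    and h: "mixed_sections_measurable M p n h" and gh: "mixed_sections_measurable M p n (\<lambda>x. g x + h x)"
  shows "k \<le> n \<Longrightarrow> x \<in> space (PiM {..<n} (\<lambda>_. M)) \<Longrightarrow>
    mixed_aux M p k (\<lambda>x. g x + h x) x \<le> mixed_aux M p k g x + mixed_aux M p k h x"
proof (induction k arbitrary: x)
  case (Suc k)
  then have k: "k < n" and x: "x \<in> space (PiM {..<n} (\<lambda>_. M))" by auto
  have "lp_norm M (p k) (\<lambda>t. mixed_aux M p k (\<lambda>x. g x + h x) (x(k := t)))
      \<le> lp_norm M (p k) (\<lambda>t. mixed_aux M p k g (x(k := t)) + mixed_aux M p k h (x(k := t)))"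
  proof (rule lp_norm_mono)
    fix t assume "t \<in> space M"
    then show "mixed_aux M p k (\<lambda>x. g x + h x) (x(k := t)) \<le> mixed_aux M p k g (x(k := t)) + mixed_aux M p k h (x(k := t))"
      using k by (intro Suc.IH fun_upd_in_space_PiM[OF x k]) auto
  qed (use p gh k x in \<open>auto simp: mixed_sections_measurable_def\<close>)
  also have "\<dots> \<le> lp_norm M (p k) (\<lambda>t. mixed_aux M p k g (x(k := t))) + lp_norm M (p k) (\<lambda>t. mixed_aux M p k h (x(k := t)))"
    using p g h k x by (intro lp_norm_add) (auto simp: mixed_sections_measurable_def)
  finally show ?case by simp
qed simp

lemma mixed_aux_sum_le:
  assumes p: "\<forall>i<n. 1 \<le> p i" and "finite E"
    and g: "\<And>F. F \<subseteq> E \<Longrightarrow> mixed_sections_measurable M p n (\<lambda>x. \<Sum>e\<in>F. g e x)"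
    and k: "k \<le> n" and x: "x \<in> space (PiM {..<n} (\<lambda>_. M))"
  shows "mixed_aux M p k (\<lambda>x. \<Sum>e\<in>E. g e x) x \<le> (\<Sum>e\<in>E. mixed_aux M p k (g e) x)"
  using \<open>finite E\<close> g
proof (induction E rule: finite_induct)
  case empty
  then show ?case by (simp add: mixed_aux_zero)
next
  case (insert e F)
  have "mixed_aux M p k (\<lambda>x. g e x + (\<Sum>e\<in>F. g e x)) x \<le> mixed_aux M p k (g e) x + mixed_aux M p k (\<lambda>x. \<Sum>e\<in>F. g e x) x"
    using insert.prems[of "{e}"] insert.prems[of F] insert.prems[of "insert e F"] insert.hyps
    by (intro mixed_aux_add_le[OF p _ _ _ k x]) auto
  also have "\<dots> \<le> mixed_aux M p k (g e) x + (\<Sum>e\<in>F. mixed_aux M p k (g e) x)"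
    using insert.IH insert.prems by (intro add_left_mono) auto
  finally show ?case using insert.hyps by simp
qed

lemma measurable_fun_upd_PiM_pair:
  assumes "k < n"
  shows "(\<lambda>(x, t). x(k := t)) \<in> measurable (PiM {..<n} (\<lambda>_. M) \<Otimes>\<^sub>M M) (PiM {..<n} (\<lambda>_. M))"
  using measurable_add_dim[of k "{..<n}" "\<lambda>_. M"] assms by (simp add: insert_absorb)

lemma measurable_fun_upd_PiM:
  assumes "k < n" "x \<in> space (PiM {..<n} (\<lambda>_. M))"
  shows "(\<lambda>t. x(k := t)) \<in> measurable M (PiM {..<n} (\<lambda>_. M))"
proof -
  have "(\<lambda>t. ((\<lambda>_. x) t)(k := (\<lambda>t. t) t)) \<in> measurable M (PiM {..<n} (\<lambda>_. M))"
    by (rule measurable_fun_upd[where J="{..<n}"]) (use assms in auto)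
  then show ?thesis by simp
qed

lemma borel_measurable_mixed_aux:
  assumes M: "sigma_finite_measure M" and g: "g \<in> borel_measurable (PiM {..<n} (\<lambda>_. M))"
  shows "k \<le> n \<Longrightarrow> mixed_aux M p k g \<in> borel_measurable (PiM {..<n} (\<lambda>_. M))"
proof (induction k)
  case (Suc k)
  then have "k < n" and "mixed_aux M p k g \<in> borel_measurable (PiM {..<n} (\<lambda>_. M))"
    by auto
  from measurable_compose[OF measurable_fun_upd_PiM_pair[OF this(1)] this(2)]
  have "(\<lambda>(x, t). mixed_aux M p k g (x(k := t))) \<in> borel_measurable (PiM {..<n} (\<lambda>_. M) \<Otimes>\<^sub>M M)"
    by (simp add: case_prod_beta')
  then show ?case
    using borel_measurable_lp_norm_param[OF M] by simp
qed (use g in simp)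

lemma mixed_sections_measurable_borel:
  assumes "sigma_finite_measure M" and "g \<in> borel_measurable (PiM {..<n} (\<lambda>_. M))"
  shows "mixed_sections_measurable M p n g"
  unfolding mixed_sections_measurable_def
  using measurable_compose[OF measurable_fun_upd_PiM borel_measurable_mixed_aux[OF assms]] by simp

lemma mixed_sections_measurable_count_space: "mixed_sections_measurable (count_space UNIV) p n g"
  by (simp add: mixed_sections_measurable_def)

lemma mixed_aux_compose_le:
  fixes \<Phi> :: "(nat \<Rightarrow> 'a) \<Rightarrow> nat \<Rightarrow> 'a"
  assumes p: "\<forall>i<n. 1 \<le> p i" and C: "C < top"
    and \<phi>: "\<And>i. i < n \<Longrightarrow> \<phi> i \<in> measurable M M"
    and \<Phi>_upd: "\<And>x i t. i < n \<Longrightarrow> \<Phi> (x(i := t)) = (\<Phi> x)(i := \<phi> i t)"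
    and \<Phi>_space: "\<And>x. x \<in> space (PiM {..<n} (\<lambda>_. M)) \<Longrightarrow> \<Phi> x \<in> space (PiM {..<n} (\<lambda>_. M))"
    and bound: "\<And>i h. i < n \<Longrightarrow> h \<in> borel_measurable M \<Longrightarrow>
      lp_norm M (p i) (\<lambda>t. h (\<phi> i t)) \<le> C * lp_norm M (p i) h"
    and H: "mixed_sections_measurable M p n H"
    and H\<Phi>: "mixed_sections_measurable M p n (\<lambda>x. H (\<Phi> x))"
  shows "k \<le> n \<Longrightarrow> x \<in> space (PiM {..<n} (\<lambda>_. M)) \<Longrightarrow>
    mixed_aux M p k (\<lambda>x. H (\<Phi> x)) x \<le> C ^ k * mixed_aux M p k H (\<Phi> x)"
proof (induction k arbitrary: x)
  case (Suc k)
  then have k: "k < n" and x: "x \<in> space (PiM {..<n} (\<lambda>_. M))" by auto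
  define G where "G = mixed_aux M p k H"
  have G: "(\<lambda>t. G ((\<Phi> x)(k := t))) \<in> borel_measurable M"
    using H k \<Phi>_space[OF x] by (auto simp: mixed_sections_measurable_def G_def)
  have "lp_norm M (p k) (\<lambda>t. mixed_aux M p k (\<lambda>x. H (\<Phi> x)) (x(k := t)))
      \<le> lp_norm M (p k) (\<lambda>t. C ^ k * G ((\<Phi> x)(k := \<phi> k t)))"
  proof (rule lp_norm_mono)
    fix t assume "t \<in> space M"
    then have "x(k := t) \<in> space (PiM {..<n} (\<lambda>_. M))"
      using fun_upd_in_space_PiM[OF x k] by simp
    then have "mixed_aux M p k (\<lambda>x. H (\<Phi> x)) (x(k := t)) \<le> C ^ k * G (\<Phi> (x(k := t)))"
      using Suc by (auto simp: G_def)
    then show "mixed_aux M p k (\<lambda>x. H (\<Phi> x)) (x(k := t)) \<le> C ^ k * G ((\<Phi> x)(k := \<phi> k t))"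
      by (simp add: \<Phi>_upd[OF k])
  qed (use p k H\<Phi> x in \<open>simp_all add: mixed_sections_measurable_def\<close>)
  also have "\<dots> \<le> C ^ k * lp_norm M (p k) (\<lambda>t. G ((\<Phi> x)(k := \<phi> k t)))"
    using p k C by (intro lp_norm_cmult measurable_compose[OF \<phi>[OF k] G]) (simp_all add: power_less_top_ennreal)
  also have "\<dots> \<le> C ^ k * (C * lp_norm M (p k) (\<lambda>t. G ((\<Phi> x)(k := t))))"
    using bound[OF k G] by (rule mult_left_mono) simp
  finally show ?case by (simp add: G_def mult.assoc mult.commute mult.left_commute)
qed simp

context
  fixes M :: "'a measure"
  assumes space_UNIV: "space M = UNIV"
begin

lemma mixed_norm_mono:
  assumes p: "\<forall>i<n. 1 \<le> p i" and h: "mixed_sections_measurable M p n h"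
    and le: "\<And>x. x \<in> space (PiM {..<n} (\<lambda>_. M)) \<Longrightarrow> h x \<le> a x"
  shows "mixed_norm M p n h \<le> mixed_norm M p n a"
  unfolding mixed_norm_def by (rule mixed_aux_mono[OF p h le order.refl undefined_in_space_PiM[OF space_UNIV]])

lemma mixed_norm_le_add:
  assumes p: "\<forall>i<n. 1 \<le> p i"
    and h: "mixed_sections_measurable M p n h" and a: "mixed_sections_measurable M p n a"
    and b: "mixed_sections_measurable M p n b" and ab: "mixed_sections_measurable M p n (\<lambda>x. a x + b x)"
    and le: "\<And>x. x \<in> space (PiM {..<n} (\<lambda>_. M)) \<Longrightarrow> h x \<le> a x + b x"
  shows "mixed_norm M p n h \<le> mixed_norm M p n a + mixed_norm M p n b"
proof -
  have "mixed_norm M p n h \<le> mixed_norm M p n (\<lambda>x. a x + b x)"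
    by (rule mixed_norm_mono[OF p h le])
  also have "\<dots> \<le> mixed_norm M p n a + mixed_norm M p n b"
    unfolding mixed_norm_def
    by (rule mixed_aux_add_le[OF p a b ab order.refl undefined_in_space_PiM[OF space_UNIV]])
  finally show ?thesis .
qed

lemma mixed_norm_le_cmult:
  assumes p: "\<forall>i<n. 1 \<le> p i" and c: "c < top"
    and h: "mixed_sections_measurable M p n h" and a: "mixed_sections_measurable M p n a"
    and ca: "mixed_sections_measurable M p n (\<lambda>x. c * a x)"
    and le: "\<And>x. x \<in> space (PiM {..<n} (\<lambda>_. M)) \<Longrightarrow> h x \<le> c * a x"
  shows "mixed_norm M p n h \<le> c * mixed_norm M p n a"
proof -
  have "mixed_norm M p n h \<le> mixed_norm M p n (\<lambda>x. c * a x)"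
    by (rule mixed_norm_mono[OF p h le])
  also have "\<dots> \<le> c * mixed_norm M p n a"
    unfolding mixed_norm_def
    by (rule mixed_aux_cmult_le[OF p c a ca order.refl undefined_in_space_PiM[OF space_UNIV]])
  finally show ?thesis .
qed

lemma mixed_norm_le_sum:
  assumes p: "\<forall>i<n. 1 \<le> p i" and E: "finite E" and h: "mixed_sections_measurable M p n h"
    and g: "\<And>F. F \<subseteq> E \<Longrightarrow> mixed_sections_measurable M p n (\<lambda>x. \<Sum>e\<in>F. g e x)"
    and le: "\<And>x. x \<in> space (PiM {..<n} (\<lambda>_. M)) \<Longrightarrow> h x \<le> (\<Sum>e\<in>E. g e x)"
  shows "mixed_norm M p n h \<le> (\<Sum>e\<in>E. mixed_norm M p n (g e))"
proof -
  have "mixed_norm M p n h \<le> mixed_norm M p n (\<lambda>x. \<Sum>e\<in>E. g e x)"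
    by (rule mixed_norm_mono[OF p h le])
  also have "\<dots> \<le> (\<Sum>e\<in>E. mixed_norm M p n (g e))"
    unfolding mixed_norm_def
    by (rule mixed_aux_sum_le[OF p E g order.refl undefined_in_space_PiM[OF space_UNIV]])
  finally show ?thesis .
qed

lemma mixed_norm_compose_le:
  fixes \<Phi> :: "(nat \<Rightarrow> 'a) \<Rightarrow> nat \<Rightarrow> 'a"
  assumes p: "\<forall>i<n. 1 \<le> p i" and C: "C < top"
    and \<phi>: "\<And>i. i < n \<Longrightarrow> \<phi> i \<in> measurable M M"
    and \<Phi>_upd: "\<And>x i t. i < n \<Longrightarrow> \<Phi> (x(i := t)) = (\<Phi> x)(i := \<phi> i t)"
    and \<Phi>_space: "\<And>x. x \<in> space (PiM {..<n} (\<lambda>_. M)) \<Longrightarrow> \<Phi> x \<in> space (PiM {..<n} (\<lambda>_. M))"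
    and bound: "\<And>i h. i < n \<Longrightarrow> h \<in> borel_measurable M \<Longrightarrow>
      lp_norm M (p i) (\<lambda>t. h (\<phi> i t)) \<le> C * lp_norm M (p i) h"
    and H: "mixed_sections_measurable M p n H"
    and H\<Phi>: "mixed_sections_measurable M p n (\<lambda>x. H (\<Phi> x))"
  shows "mixed_norm M p n (\<lambda>x. H (\<Phi> x)) \<le> C ^ n * mixed_norm M p n H"
proof -
  have undef: "(\<lambda>_. undefined) \<in> space (PiM {..<n} (\<lambda>_. M))"
    by (rule undefined_in_space_PiM[OF space_UNIV])
  have "\<Phi> (\<lambda>_. undefined) \<in> extensional {..<n}"
    using \<Phi>_space[OF undef] by (simp add: space_PiM PiE_def)
  then have "mixed_aux M p n H (\<Phi> (\<lambda>_. undefined)) = mixed_aux M p n H (\<lambda>_. undefined)"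
    by (intro mixed_aux_cong) (simp add: extensional_def)
  moreover have "mixed_aux M p n (\<lambda>x. H (\<Phi> x)) (\<lambda>_. undefined) \<le> C ^ n * mixed_aux M p n H (\<Phi> (\<lambda>_. undefined))"
    by (rule mixed_aux_compose_le[OF p C \<phi> \<Phi>_upd \<Phi>_space bound H H\<Phi> order.refl undef])
  ultimately show ?thesis
    unfolding mixed_norm_def by simp
qed

end

section \<open>The amalgam space is a linear space\<close>

lemma loc_int_borel_measurable:
  assumes "loc_int n f"
  shows "f \<in> borel_measurable (Rn n)"
proof (rule borel_measurable_LIMSEQ_metric)
  show "(\<lambda>x. indicator (box_R n (real N)) x *\<^sub>R f x) \<in> borel_measurable (Rn n)" for N
    using assms unfolding loc_int_def set_integrable_def by (intro borel_measurable_integrable) auto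
  fix x assume x: "x \<in> space (Rn n)"
  obtain N0 :: nat where N0: "(\<Sum>i<n. \<bar>x i\<bar>) \<le> real N0"
    using real_arch_simple by blast
  have "x \<in> box_R n (real N)" if "N0 \<le> N" for N
  proof -
    have "\<bar>x i\<bar> \<le> real N" if "i < n" for i
      using member_le_sum[of i "{..<n}" "\<lambda>i. \<bar>x i\<bar>"] that N0 \<open>N0 \<le> N\<close> by simp
    then show ?thesis using x by (auto simp: box_R_def)
  qed
  then show "(\<lambda>N. indicator (box_R n (real N)) x *\<^sub>R f x) \<longlonglongrightarrow> f x"
    by (auto intro!: tendsto_eventually eventually_sequentiallyI[of N0])
qed

lemma loc_int_add: "loc_int n f \<Longrightarrow> loc_int n g \<Longrightarrow> loc_int n (\<lambda>x. f x + g x)"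
  unfolding loc_int_def set_integrable_def by (auto simp: scaleR_add_right)

lemma loc_int_cmult: "loc_int n f \<Longrightarrow> loc_int n (\<lambda>x. c * f x)"
  unfolding loc_int_def by (auto intro!: set_integrable_mult_right)

lemma loc_int_zero: "loc_int n (\<lambda>_. 0)"
  unfolding loc_int_def set_integrable_def by simp

lemma sets_cube [measurable]: "cube n k \<in> sets (Rn n)"
proof -
  have "cube n k = space (Rn n) \<inter> (\<Inter>i<n. {x \<in> space (Rn n). real_of_int (k i) \<le> x i \<and> x i < real_of_int (k i) + 1})"
    by (auto simp: cube_def)
  also have "\<dots> \<in> sets (Rn n)" by measurable
  finally show ?thesis .
qed

definition cube_norm :: "nat \<Rightarrow> (nat \<Rightarrow> ennreal) \<Rightarrow> ((nat \<Rightarrow> real) \<Rightarrow> complex) \<Rightarrow> (nat \<Rightarrow> int) \<Rightarrow> ennreal" where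
  "cube_norm n p f k = Lmixed_norm n p (\<lambda>x. indicator (cube n k) x * f x)"

lemma amalgam_norm_eq: "amalgam_norm n p s f = mixed_norm (count_space UNIV) s n (cube_norm n p f)"
  unfolding amalgam_norm_def by (simp add: cube_norm_def[abs_def])

lemma mixed_sections_measurable_lborel:
  "h \<in> borel_measurable (Rn n) \<Longrightarrow> mixed_sections_measurable lborel p n h"
  by (rule mixed_sections_measurable_borel[OF sigma_finite_lborel])

lemma cube_norm_add_le:
  assumes p: "\<forall>i<n. 1 \<le> p i" and [measurable]: "f \<in> borel_measurable (Rn n)" "g \<in> borel_measurable (Rn n)"
  shows "cube_norm n p (\<lambda>x. f x + g x) k \<le> cube_norm n p f k + cube_norm n p g k"
  unfolding cube_norm_def Lmixed_norm_def
proof (rule mixed_norm_le_add[OF _ p])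
  fix x
  have "cmod (indicator (cube n k) x * (f x + g x))
      \<le> cmod (indicator (cube n k) x * f x) + cmod (indicator (cube n k) x * g x)"
    by (simp add: distrib_left norm_triangle_ineq)
  then show "ennreal (cmod (indicator (cube n k) x * (f x + g x)))
      \<le> ennreal (cmod (indicator (cube n k) x * f x)) + ennreal (cmod (indicator (cube n k) x * g x))"
    by (simp flip: ennreal_plus)
qed (auto intro!: mixed_sections_measurable_lborel)

lemma cube_norm_cmult_le:
  assumes p: "\<forall>i<n. 1 \<le> p i" and [measurable]: "f \<in> borel_measurable (Rn n)"
  shows "cube_norm n p (\<lambda>x. c * f x) k \<le> ennreal (cmod c) * cube_norm n p f k"
  unfolding cube_norm_def Lmixed_norm_def
  by (rule mixed_norm_le_cmult[OF _ p])
     (auto intro!: mixed_sections_measurable_lborel simp: norm_mult ennreal_mult mult_ac)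

lemma amalgam_norm_add_le:
  assumes p: "\<forall>i<n. 1 \<le> p i" and s: "\<forall>i<n. 1 \<le> s i"
    and f: "f \<in> borel_measurable (Rn n)" and g: "g \<in> borel_measurable (Rn n)"
  shows "amalgam_norm n p s (\<lambda>x. f x + g x) \<le> amalgam_norm n p s f + amalgam_norm n p s g"
  unfolding amalgam_norm_eq
  by (rule mixed_norm_le_add[OF _ s]) (auto intro: mixed_sections_measurable_count_space cube_norm_add_le[OF p f g])

lemma amalgam_norm_cmult_le:
  assumes p: "\<forall>i<n. 1 \<le> p i" and s: "\<forall>i<n. 1 \<le> s i" and f: "f \<in> borel_measurable (Rn n)"
  shows "amalgam_norm n p s (\<lambda>x. c * f x) \<le> ennreal (cmod c) * amalgam_norm n p s f"
  unfolding amalgam_norm_eq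
  by (rule mixed_norm_le_cmult[OF _ s]) (auto intro: mixed_sections_measurable_count_space cube_norm_cmult_le[OF p f])

lemma amalgam_norm_zero: "amalgam_norm n p s (\<lambda>_. 0) = 0"
  by (simp add: amalgam_norm_def Lmixed_norm_def mixed_norm_zero)

lemma zero_in_amalgam: "(\<lambda>_. 0) \<in> amalgam n p s"
  by (simp add: amalgam_def amalgam_norm_zero loc_int_zero)

lemma amalgam_add:
  assumes p: "\<forall>i<n. 1 \<le> p i" and s: "\<forall>i<n. 1 \<le> s i"
    and f: "f \<in> amalgam n p s" and g: "g \<in> amalgam n p s"
  shows "(\<lambda>x. f x + g x) \<in> amalgam n p s"
proof -
  have "amalgam_norm n p s (\<lambda>x. f x + g x) \<le> amalgam_norm n p s f + amalgam_norm n p s g"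
    using f g by (intro amalgam_norm_add_le[OF p s] loc_int_borel_measurable) (auto simp: amalgam_def)
  also have "\<dots> < top" using f g by (auto simp: amalgam_def)
  finally show ?thesis using f g by (auto simp: amalgam_def intro: loc_int_add)
qed

lemma amalgam_cmult:
  assumes p: "\<forall>i<n. 1 \<le> p i" and s: "\<forall>i<n. 1 \<le> s i" and f: "f \<in> amalgam n p s"
  shows "(\<lambda>x. c * f x) \<in> amalgam n p s"
proof -
  have "amalgam_norm n p s (\<lambda>x. c * f x) \<le> ennreal (cmod c) * amalgam_norm n p s f"
    using f by (intro amalgam_norm_cmult_le[OF p s] loc_int_borel_measurable) (auto simp: amalgam_def)
  also have "\<dots> < top" using f by (auto simp: amalgam_def ennreal_mult_less_top)
  finally show ?thesis using f by (auto simp: amalgam_def intro: loc_int_cmult)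
qed

lemma amalgam_sum:
  assumes p: "\<forall>i<n. 1 \<le> p i" and s: "\<forall>i<n. 1 \<le> s i"
  shows "finite F \<Longrightarrow> (\<And>j. j \<in> F \<Longrightarrow> h j \<in> amalgam n p s) \<Longrightarrow> (\<lambda>x. \<Sum>j\<in>F. h j x) \<in> amalgam n p s"
proof (induction F rule: finite_induct)
  case (insert j F)
  then have "(\<lambda>x. h j x + (\<Sum>j\<in>F. h j x)) \<in> amalgam n p s"
    by (intro amalgam_add[OF p s]) auto
  then show ?case using insert.hyps by simp
qed (simp add: zero_in_amalgam)

section \<open>Dilations preserve the amalgam space\<close>

definition dilate :: "nat \<Rightarrow> real \<Rightarrow> (nat \<Rightarrow> real) \<Rightarrow> nat \<Rightarrow> real" where
  "dilate n r x = restrict (\<lambda>i. x i / r) {..<n}"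

lemma measurable_dilate [measurable]: "dilate n r \<in> measurable (Rn n) (Rn n)"
  unfolding dilate_def by measurable

lemma dilate_in_space: "dilate n r x \<in> space (Rn n)"
  by (auto simp: dilate_def space_PiM)

lemma dilate_fun_upd: "k < n \<Longrightarrow> dilate n r (x(k := t)) = (dilate n r x)(k := t / r)"
  by (auto simp: dilate_def fun_eq_iff)

lemma dilate_1: "x \<in> space (Rn n) \<Longrightarrow> dilate n 1 x = x"
  by (auto simp: dilate_def space_PiM PiE_iff extensional_def fun_eq_iff)

lemma dil_eq_dilate: "dil n a r f x = complex_of_real (r powr (- real n * enn2real (inverse a))) * f (dilate n r x)"
  by (simp add: dil_def dilate_def)

lemma mixed_norm_dilate_le:
  assumes p: "\<forall>i<n. 1 \<le> p i" and r: "0 < r" and [measurable]: "H \<in> borel_measurable (Rn n)"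
  shows "mixed_norm lborel p n (\<lambda>x. H (dilate n r x)) \<le> ennreal (max 1 r) ^ n * mixed_norm lborel p n H"
  by (rule mixed_norm_compose_le[where \<phi> = "\<lambda>_ t. t / r"])
     (use p r in \<open>auto simp: dilate_fun_upd dilate_in_space intro!: lp_norm_lborel_dilate_le
       mixed_sections_measurable_lborel\<close>)

definition index_map :: "nat \<Rightarrow> (nat \<Rightarrow> int \<Rightarrow> int) \<Rightarrow> (nat \<Rightarrow> int) \<Rightarrow> nat \<Rightarrow> int" where
  "index_map n \<psi> k = (\<lambda>i. if i < n then \<psi> i (k i) else k i)"

lemma mixed_norm_index_map_le:
  assumes s: "\<forall>i<n. 1 \<le> s i" and m: "1 \<le> m"
    and fibres: "\<And>i j. i < n \<Longrightarrow> finite {t. \<psi> i t = j} \<and> card {t. \<psi> i t = j} \<le> m"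
  shows "mixed_norm (count_space UNIV) s n (\<lambda>k. b (index_map n \<psi> k))
     \<le> ennreal (max 1 (real m)) ^ n * mixed_norm (count_space UNIV) s n b"
proof (rule mixed_norm_compose_le[where \<phi> = \<psi>])
  show "lp_norm (count_space UNIV) (s i) (\<lambda>t. h (\<psi> i t)) \<le> ennreal (max 1 (real m)) * lp_norm (count_space UNIV) (s i) h"
    if "i < n" for i and h :: "int \<Rightarrow> ennreal"
    using s m fibres that by (intro lp_norm_count_space_compose_le) auto
qed (use s in \<open>auto simp: index_map_def fun_eq_iff space_PiM PiE_iff extensional_def
       mixed_sections_measurable_count_space\<close>)

text \<open>The cube \<open>Q\<^sub>k\<close>, dilated by \<open>1/r\<close>, lies in the union of the cubes
  \<open>Q\<^sub>j\<close> with \<open>j\<^sub>i = \<lfloor>k\<^sub>i/r\<rfloor> + e\<^sub>i\<close> and \<open>0 \<le> e\<^sub>i \<le> \<lceil>1/r\<rceil>\<close>; conversely, each \<open>j\<^sub>i\<close> arises from at most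
  \<open>\<lceil>r\<rceil>\<close> values of \<open>k\<^sub>i\<close>.\<close>

definition cube_offsets :: "nat \<Rightarrow> real \<Rightarrow> (nat \<Rightarrow> int) set" where
  "cube_offsets n r = PiE {..<n} (\<lambda>_. {0..\<lceil>1 / r\<rceil>})"

definition shifted_floor_div :: "real \<Rightarrow> (nat \<Rightarrow> int) \<Rightarrow> nat \<Rightarrow> int \<Rightarrow> int" where
  "shifted_floor_div r e i t = \<lfloor>real_of_int t / r\<rfloor> + e i"

lemma finite_cube_offsets: "finite (cube_offsets n r)"
  unfolding cube_offsets_def by (rule finite_PiE) auto

lemma floor_divide_offset:
  fixes k :: int and x r :: real
  assumes r: "0 < r" and x: "k \<le> x" "x < real_of_int k + 1"
  shows "\<lfloor>x / r\<rfloor> - \<lfloor>k / r\<rfloor> \<in> {0..\<lceil>1 / r\<rceil>}"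
proof -
  have "k / r \<le> x / r" "x / r < k / r + 1 / r"
    using r x by (auto simp: divide_right_mono divide_strict_right_mono simp flip: add_divide_distrib)
  then have "\<lfloor>k / r\<rfloor> \<le> \<lfloor>x / r\<rfloor>" "real_of_int \<lfloor>x / r\<rfloor> < real_of_int \<lfloor>k / r\<rfloor> + 1 + real_of_int \<lceil>1 / r\<rceil>"
    using floor_mono of_int_floor_le[of "x / r"] real_of_int_floor_add_one_gt[of "k / r"]
      le_of_int_ceiling[of "1 / r"] by (blast, linarith)
  then show ?thesis by simp
qed

lemma dilate_cube_cover:
  assumes r: "0 < r" and x: "x \<in> cube n k"
  shows "\<exists>e\<in>cube_offsets n r. dilate n r x \<in> cube n (index_map n (shifted_floor_div r e) k)"
proof
  define e where "e = restrict (\<lambda>i. \<lfloor>x i / r\<rfloor> - \<lfloor>real_of_int (k i) / r\<rfloor>) {..<n}"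
  have bounds: "real_of_int (k i) \<le> x i" "x i < real_of_int (k i) + 1" if "i < n" for i
    using x that by (auto simp: cube_def)
  show "e \<in> cube_offsets n r"
    using floor_divide_offset[OF r bounds] by (auto simp: cube_offsets_def e_def)
  have "index_map n (shifted_floor_div r e) k i = \<lfloor>dilate n r x i\<rfloor>" if "i < n" for i
    using that by (simp add: index_map_def shifted_floor_div_def e_def dilate_def)
  then show "dilate n r x \<in> cube n (index_map n (shifted_floor_div r e) k)"
    using dilate_in_space[of n r x] by (simp add: cube_def)
qed

lemma card_shifted_floor_div_fibre:
  assumes r: "0 < r"
  shows "finite {t. shifted_floor_div r e i t = j} \<and> card {t. shifted_floor_div r e i t = j} \<le> nat \<lceil>r\<rceil>"
proof -
  define a where "a = \<lceil>r * real_of_int (j - e i)\<rceil>"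
  have "{t. shifted_floor_div r e i t = j} \<subseteq> {a..<a + \<lceil>r\<rceil>}"
  proof
    fix t assume "t \<in> {t. shifted_floor_div r e i t = j}"
    then have "\<lfloor>real_of_int t / r\<rfloor> = j - e i" by (simp add: shifted_floor_div_def)
    then have "real_of_int (j - e i) \<le> real_of_int t / r" "real_of_int t / r < real_of_int (j - e i) + 1"
      by linarith+
    then have "r * real_of_int (j - e i) \<le> real_of_int t" "real_of_int t < r * real_of_int (j - e i) + r"
      using r by (simp_all add: field_simps)
    then show "t \<in> {a..<a + \<lceil>r\<rceil>}"
      unfolding a_def using le_of_int_ceiling[of r] by (auto simp: ceiling_le_iff ceiling_less_iff) linarith
  qed
  then show ?thesis
    using card_mono[of "{a..<a + \<lceil>r\<rceil>}"] finite_subset by fastforce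
qed


lemma cube_norm_dilate_le:
  assumes p: "\<forall>i<n. 1 \<le> p i" and r: "0 < r" and f[measurable]: "f \<in> borel_measurable (Rn n)"
  shows "cube_norm n p (\<lambda>x. f (dilate n r x)) k \<le>
    ennreal (max 1 r) ^ n * (\<Sum>e\<in>cube_offsets n r. cube_norm n p f (index_map n (shifted_floor_div r e) k))"
proof -
  define H where "H e y = ennreal (cmod (indicator (cube n (index_map n (shifted_floor_div r e) k)) y * f y))" for e y
  have [measurable]: "H e \<in> borel_measurable (Rn n)" for e
    unfolding H_def by measurable
  have "cube_norm n p (\<lambda>x. f (dilate n r x)) k \<le> mixed_norm lborel p n (\<lambda>x. \<Sum>e\<in>cube_offsets n r. H e (dilate n r x))"
    unfolding cube_norm_def Lmixed_norm_def
  proof (rule mixed_norm_mono[OF _ p])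
    fix x
    show "ennreal (cmod (indicator (cube n k) x * f (dilate n r x))) \<le> (\<Sum>e\<in>cube_offsets n r. H e (dilate n r x))"
    proof (cases "x \<in> cube n k")
      case True
      then obtain e where "e \<in> cube_offsets n r" "dilate n r x \<in> cube n (index_map n (shifted_floor_div r e) k)"
        using dilate_cube_cover[OF r] by blast
      then show ?thesis
        using True member_le_sum[of e "cube_offsets n r" "\<lambda>e. H e (dilate n r x)"] finite_cube_offsets
        by (simp add: H_def)
    qed simp
  qed (auto intro!: mixed_sections_measurable_lborel)
  also have "\<dots> \<le> ennreal (max 1 r) ^ n * mixed_norm lborel p n (\<lambda>y. \<Sum>e\<in>cube_offsets n r. H e y)"
    by (rule mixed_norm_dilate_le[OF p r]) measurable
  also have "mixed_norm lborel p n (\<lambda>y. \<Sum>e\<in>cube_offsets n r. H e y) \<le> (\<Sum>e\<in>cube_offsets n r. mixed_norm lborel p n (H e))"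
    by (rule mixed_norm_le_sum[OF _ p finite_cube_offsets]) (auto intro!: mixed_sections_measurable_lborel)
  finally show ?thesis
    by (simp add: cube_norm_def Lmixed_norm_def H_def[abs_def] mult_left_mono)
qed

lemma amalgam_norm_dilate_le:
  assumes p: "\<forall>i<n. 1 \<le> p i" and s: "\<forall>i<n. 1 \<le> s i" and r: "0 < r"
    and f: "f \<in> borel_measurable (Rn n)"
  shows "amalgam_norm n p s (\<lambda>x. f (dilate n r x)) \<le>
    ennreal (max 1 r) ^ n * (of_nat (card (cube_offsets n r)) * ennreal (max 1 (real (nat \<lceil>r\<rceil>))) ^ n)
      * amalgam_norm n p s f"
proof -
  define c where "c = ennreal (max 1 r) ^ n"
  have "amalgam_norm n p s (\<lambda>x. f (dilate n r x)) \<le>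
      c * mixed_norm (count_space UNIV) s n (\<lambda>k. \<Sum>e\<in>cube_offsets n r. cube_norm n p f (index_map n (shifted_floor_div r e) k))"
    unfolding amalgam_norm_eq
    by (rule mixed_norm_le_cmult[OF _ s])
       (auto simp: c_def power_less_top_ennreal mixed_sections_measurable_count_space intro: cube_norm_dilate_le[OF p r f])
  also have "mixed_norm (count_space UNIV) s n (\<lambda>k. \<Sum>e\<in>cube_offsets n r. cube_norm n p f (index_map n (shifted_floor_div r e) k))
      \<le> (\<Sum>e\<in>cube_offsets n r. mixed_norm (count_space UNIV) s n (\<lambda>k. cube_norm n p f (index_map n (shifted_floor_div r e) k)))"
    by (rule mixed_norm_le_sum[OF _ s finite_cube_offsets]) (auto simp: mixed_sections_measurable_count_space)
  also have "\<dots> \<le> (\<Sum>e\<in>cube_offsets n r. ennreal (max 1 (real (nat \<lceil>r\<rceil>))) ^ n * amalgam_norm n p s f)"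
    unfolding amalgam_norm_eq using r
    by (intro sum_mono mixed_norm_index_map_le[OF s] card_shifted_floor_div_fibre) linarith+
  finally show ?thesis
    by (simp add: c_def mult_left_mono mult.assoc)
qed

lemma emeasure_lborel_divide_vimage:
  assumes r: "0 < r" and A: "A \<in> sets lborel"
  shows "emeasure lborel {t. t / r \<in> A} = ennreal r * emeasure lborel A"
proof -
  have "emeasure lborel {t. t / r \<in> A} = emeasure (distr lborel borel ((*) (1 / r))) A"
    using A by (subst emeasure_distr) (auto simp: vimage_def)
  also have "\<dots> = emeasure (density lborel (\<lambda>_. ennreal (inverse \<bar>1 / r\<bar>))) A"
    using lborel_distr_mult[of "1 / r"] r by simp
  also have "\<dots> = ennreal r * emeasure lborel A"
    using A r by (simp add: emeasure_density_const)
  finally show ?thesis .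
qed

lemma Rn_eq_density_distr_dilate:
  assumes r: "0 < r"
  shows "Rn n = density (distr (Rn n) (Rn n) (dilate n r)) (\<lambda>_. ennreal ((1 / r) ^ n))"
proof -
  interpret product_sigma_finite "\<lambda>_::nat. lborel" by standard
  have "density (distr (Rn n) (Rn n) (dilate n r)) (\<lambda>_. ennreal ((1 / r) ^ n)) = PiM {..<n} (\<lambda>_. lborel)"
  proof (rule PiM_eqI)
    fix A :: "nat \<Rightarrow> real set" assume A: "\<And>i. i \<in> {..<n} \<Longrightarrow> A i \<in> sets lborel"
    have box: "PiE {..<n} A \<in> sets (Rn n)"
      using A by (intro sets_PiM_I_finite) auto
    have "(\<lambda>t::real. t / r) \<in> measurable lborel lborel"
      by measurable
    from measurable_sets[OF this A]
    have sets: "{t. t / r \<in> A i} \<in> sets lborel" if "i \<in> {..<n}" for i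
      using that by (simp add: vimage_def)
    have "dilate n r -` PiE {..<n} A \<inter> space (Rn n) = PiE {..<n} (\<lambda>i. {t. t / r \<in> A i})"
      by (intro set_eqI iffI) (simp_all add: dilate_def space_PiM PiE_iff extensional_restrict)
    then have "emeasure (distr (Rn n) (Rn n) (dilate n r)) (PiE {..<n} A) = emeasure (Rn n) (PiE {..<n} (\<lambda>i. {t. t / r \<in> A i}))"
      by (simp add: emeasure_distr[OF measurable_dilate box])
    also have "\<dots> = (\<Prod>i<n. emeasure lborel {t. t / r \<in> A i})"
      by (rule emeasure_PiM) (use sets in auto)
    also have "\<dots> = (\<Prod>i<n. ennreal r * emeasure lborel (A i))"
      by (rule prod.cong) (auto intro!: emeasure_lborel_divide_vimage[OF r] A)
    also have "\<dots> = ennreal (r ^ n) * (\<Prod>i<n. emeasure lborel (A i))"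
      using r by (simp add: prod.distrib ennreal_power)
    finally have distr: "emeasure (distr (Rn n) (Rn n) (dilate n r)) (PiE {..<n} A)
        = ennreal (r ^ n) * (\<Prod>i<n. emeasure lborel (A i))" .
    have "ennreal ((1 / r) ^ n) * ennreal (r ^ n) = 1"
      using r by (simp add: power_one_over flip: ennreal_mult)
    then show "emeasure (density (distr (Rn n) (Rn n) (dilate n r)) (\<lambda>_. ennreal ((1 / r) ^ n))) (PiE {..<n} A)
        = (\<Prod>i\<in>{..<n}. emeasure lborel (A i))"
      using box by (simp add: emeasure_density_const distr mult.assoc[symmetric])
  qed simp_all
  then show ?thesis by simp
qed

lemma nn_integral_dilate:
  assumes r: "0 < r" and [measurable]: "g \<in> borel_measurable (Rn n)"
  shows "(\<integral>\<^sup>+y. g y \<partial>Rn n) = ennreal ((1 / r) ^ n) * (\<integral>\<^sup>+x. g (dilate n r x) \<partial>Rn n)"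
proof -
  have "(\<integral>\<^sup>+y. g y \<partial>Rn n) = (\<integral>\<^sup>+y. ennreal ((1 / r) ^ n) * g y \<partial>distr (Rn n) (Rn n) (dilate n r))"
    by (subst Rn_eq_density_distr_dilate[OF r]) (simp add: nn_integral_density)
  also have "\<dots> = ennreal ((1 / r) ^ n) * (\<integral>\<^sup>+x. g (dilate n r x) \<partial>Rn n)"
    by (simp add: nn_integral_distr nn_integral_cmult)
  finally show ?thesis .
qed

lemma integrable_dilate:
  fixes g :: "(nat \<Rightarrow> real) \<Rightarrow> complex"
  assumes r: "0 < r" and g: "integrable (Rn n) g"
  shows "integrable (Rn n) (\<lambda>x. g (dilate n r x))"
proof -
  have [measurable]: "g \<in> borel_measurable (Rn n)"
    using g by (rule borel_measurable_integrable)
  have "(\<integral>\<^sup>+y. norm (g y) \<partial>Rn n) = ennreal ((1 / r) ^ n) * (\<integral>\<^sup>+x. norm (g (dilate n r x)) \<partial>Rn n)"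
    by (rule nn_integral_dilate[OF r]) measurable
  then have "ennreal ((1 / r) ^ n) * (\<integral>\<^sup>+x. norm (g (dilate n r x)) \<partial>Rn n) < top"
    using g by (simp add: integrable_iff_bounded)
  then show ?thesis
    using r by (auto simp: integrable_iff_bounded ennreal_mult_less_top)
qed

lemma loc_int_dilate:
  assumes r: "0 < r" and f: "loc_int n f"
  shows "loc_int n (\<lambda>x. f (dilate n r x))"
  unfolding loc_int_def
proof
  fix R
  have "dilate n r x \<in> box_R n (R / r) \<longleftrightarrow> x \<in> box_R n R" if "x \<in> space (Rn n)" for x
    using r that dilate_in_space[of n r x] by (auto simp: box_R_def dilate_def abs_divide divide_le_cancel)
  then have "integrable (Rn n) (\<lambda>x. indicator (box_R n R) x *\<^sub>R f (dilate n r x)) \<longleftrightarrow>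
      integrable (Rn n) (\<lambda>x. indicator (box_R n (R / r)) (dilate n r x) *\<^sub>R f (dilate n r x))"
    by (intro Bochner_Integration.integrable_cong) (auto simp: indicator_def)
  moreover have "integrable (Rn n) (\<lambda>x. indicator (box_R n (R / r)) (dilate n r x) *\<^sub>R f (dilate n r x))"
    using f by (intro integrable_dilate[OF r]) (simp add: loc_int_def set_integrable_def)
  ultimately show "set_integrable (Rn n) (box_R n R) (\<lambda>x. f (dilate n r x))"
    unfolding set_integrable_def by simp
qed

lemma dil_in_amalgam:
  assumes p: "\<forall>i<n. 1 \<le> p i" and s: "\<forall>i<n. 1 \<le> s i" and r: "0 < r" and f: "f \<in> amalgam n p s"
  shows "dil n a r f \<in> amalgam n p s"
proof -
  have "amalgam_norm n p s (\<lambda>x. f (dilate n r x)) < top"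
    using f amalgam_norm_dilate_le[OF p s r loc_int_borel_measurable[of n f]]
    by (auto simp: amalgam_def ennreal_mult_less_top power_less_top_ennreal of_nat_less_top
        intro: le_less_trans)
  then have "(\<lambda>x. f (dilate n r x)) \<in> amalgam n p s"
    using loc_int_dilate[OF r] f by (simp add: amalgam_def)
  then show ?thesis
    unfolding dil_eq_dilate by (rule amalgam_cmult[OF p s])
qed

section \<open>The amalgam space is dense in \<open>\<H>\<close>\<close>

lemma conj_exp_ge_1: "1 \<le> conj_exp x"
proof (cases "1 - inverse x = 0")
  case False
  moreover have "1 - inverse x \<le> (1 :: ennreal)"
    by (simp add: diff_le_self_ennreal)
  ultimately obtain y where "1 - inverse x = ennreal y" "0 < y" "y \<le> 1"
    by (cases "1 - inverse x" rule: ennreal_cases) (auto simp: ennreal_le_1)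
  then show ?thesis
    by (simp add: conj_exp_def inverse_ennreal one_le_inverse)
qed (simp add: conj_exp_def)

lemma Hnorm_le_block_decomp:
  "block_decomp n p s a f c r g \<Longrightarrow> Hnorm n p s a f \<le> (\<Sum>j. cmod (c j))"
  unfolding Hnorm_def
  by (rule cInf_lower, blast, rule bdd_belowI[of _ 0]) (auto simp: block_decomp_def intro!: suminf_nonneg)

lemma block_decomp_single:
  assumes "0 < r" and "g \<in> amalgam n p s" and "amalgam_norm n p s g \<le> 1"
    and f: "\<And>x. x \<in> space (Rn n) \<Longrightarrow> f x = c * dil n a r g x"
  shows "block_decomp n p s a f (\<lambda>j. if j = 0 then c else 0) (\<lambda>_. r) (\<lambda>j. if j = 0 then g else (\<lambda>_. 0))"
  unfolding block_decomp_def
proof (intro conjI allI)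
  show "summable (\<lambda>j. cmod (if j = 0 then c else 0))"
    by (rule summable_finite[of "{0}"]) auto
  fix R
  have "(\<Sum>j<N. (if j = 0 then c else 0) * dil n a r (if j = 0 then g else (\<lambda>_. 0)) x) = f x"
    if "1 \<le> N" "x \<in> space (Rn n)" for N :: nat and x
  proof -
    have "(\<Sum>j<N. (if j = 0 then c else 0) * dil n a r (if j = 0 then g else (\<lambda>_. 0)) x)
        = (\<Sum>j<N. if j = 0 then c * dil n a r g x else 0)"
      by (rule sum.cong) auto
    then show ?thesis
      using that f by simp
  qed
  then show "(\<lambda>N. \<integral>\<^sup>+x. indicator (box_R n R) x * ennreal (cmod (f x -
      (\<Sum>j<N. (if j = 0 then c else 0) * dil n a r (if j = 0 then g else (\<lambda>_. 0)) x))) \<partial>Rn n) \<longlonglongrightarrow> 0"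
    by (intro tendsto_eventually eventually_sequentiallyI[of 1]) (simp add: nn_integral_cong[where v = "\<lambda>_. 0"])
qed (use assms zero_in_amalgam amalgam_norm_zero in auto)

lemma amalgam_subset_Hspace:
  assumes p: "\<forall>i<n. 1 \<le> p i" and s: "\<forall>i<n. 1 \<le> s i"
  shows "amalgam n p s \<subseteq> Hspace n p s a"
proof
  fix f assume f: "f \<in> amalgam n p s"
  obtain b where b: "amalgam_norm n p s f = ennreal b" "0 \<le> b"
    using f by (cases "amalgam_norm n p s f" rule: ennreal_cases) (auto simp: amalgam_def)
  define M where "M = b + 1"
  have M: "0 < M" using b by (simp add: M_def)
  define g where "g x = complex_of_real (1 / M) * f x" for x
  have "amalgam_norm n p s g \<le> ennreal (1 / M) * amalgam_norm n p s f"
    using M f unfolding g_def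
    by (intro order_trans[OF amalgam_norm_cmult_le[OF p s]] loc_int_borel_measurable)
      (auto simp: amalgam_def norm_divide)
  also have "\<dots> = ennreal (b / M)"
    using b M by (simp flip: ennreal_mult)
  also have "\<dots> \<le> 1"
    using b by (simp add: M_def)
  finally have "block_decomp n p s a f (\<lambda>j. if j = 0 then complex_of_real M else 0) (\<lambda>_. 1)
      (\<lambda>j. if j = 0 then g else (\<lambda>_. 0))"
    using M by (intro block_decomp_single amalgam_cmult[OF p s f, of "1 / M", folded g_def])
      (auto simp: g_def dil_eq_dilate dilate_1)
  then show "f \<in> Hspace n p s a"
    using f by (auto simp: Hspace_def amalgam_def)
qed

lemma block_decomp_tail:
  assumes "block_decomp n p s a f c r g"
  shows "block_decomp n p s a (\<lambda>x. f x - (\<Sum>j<N. c j * dil n a (r j) (g j) x))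
    (\<lambda>j. c (j + N)) (\<lambda>j. r (j + N)) (\<lambda>j. g (j + N))"
proof -
  have "(\<Sum>j<M + N. h j) = (\<Sum>j<N. h j) + (\<Sum>j<M. h (j + N))" for M and h :: "nat \<Rightarrow> complex"
    by (induction M) (simp_all add: ac_simps)
  then have split: "f x - (\<Sum>j<N. c j * dil n a (r j) (g j) x) - (\<Sum>j<M. c (j + N) * dil n a (r (j + N)) (g (j + N)) x)
      = f x - (\<Sum>j<M + N. c j * dil n a (r j) (g j) x)" for x M
    by (simp add: diff_diff_eq)
  have "\<forall>j. 0 < r (j + N) \<and> g (j + N) \<in> amalgam n p s \<and> amalgam_norm n p s (g (j + N)) \<le> 1"
    and "summable (\<lambda>j. cmod (c (j + N)))"
    using assms summable_ignore_initial_segment[of "\<lambda>j. cmod (c j)" N] by (simp_all add: block_decomp_def)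
  moreover have "(\<lambda>M. \<integral>\<^sup>+x. indicator (box_R n R) x *
      ennreal (cmod (f x - (\<Sum>j<M + N. c j * dil n a (r j) (g j) x))) \<partial>Rn n) \<longlonglongrightarrow> 0" for R
  proof -
    have "(\<lambda>M. \<integral>\<^sup>+x. indicator (box_R n R) x *
        ennreal (cmod (f x - (\<Sum>j<M. c j * dil n a (r j) (g j) x))) \<partial>Rn n) \<longlonglongrightarrow> 0"
      using assms by (simp add: block_decomp_def)
    from LIMSEQ_ignore_initial_segment[OF this, of N] show ?thesis .
  qed
  ultimately show ?thesis
    unfolding block_decomp_def split by blast
qed

lemma Hspace_approx_by_amalgam:
  assumes p: "\<forall>i<n. 1 \<le> p i" and s: "\<forall>i<n. 1 \<le> s i" and f: "f \<in> Hspace n p s a" and e: "0 < \<epsilon>"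
  shows "\<exists>G\<in>amalgam n p s. (\<lambda>x. f x - G x) \<in> Hspace n p s a \<and> Hnorm n p s a (\<lambda>x. f x - G x) < \<epsilon>"
proof -
  from f obtain c r g where f_loc: "loc_int n f" and decomp: "block_decomp n p s a f c r g"
    by (auto simp: Hspace_def)
  have blocks: "\<And>j. 0 < r j \<and> g j \<in> amalgam n p s" and summable: "summable (\<lambda>j. cmod (c j))"
    using decomp by (auto simp: block_decomp_def)
  obtain N where N: "(\<Sum>j. cmod (c (j + N))) < \<epsilon>"
    using suminf_exist_split[OF e summable] by (auto simp: suminf_nonneg[OF summable_ignore_initial_segment[OF summable]])
  define G where "G x = (\<Sum>j<N. c j * dil n a (r j) (g j) x)" for x
  have G: "G \<in> amalgam n p s"
    unfolding G_def[abs_def] using blocks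
    by (intro amalgam_sum[OF p s] amalgam_cmult[OF p s] dil_in_amalgam[OF p s]) auto
  have "loc_int n (\<lambda>x. f x - G x)"
    using loc_int_add[OF f_loc loc_int_cmult[of n G "-1"]] G by (simp add: amalgam_def)
  moreover have tail: "block_decomp n p s a (\<lambda>x. f x - G x) (\<lambda>j. c (j + N)) (\<lambda>j. r (j + N)) (\<lambda>j. g (j + N))"
    unfolding G_def by (rule block_decomp_tail[OF decomp])
  ultimately have "(\<lambda>x. f x - G x) \<in> Hspace n p s a"
    by (auto simp: Hspace_def)
  with G N Hnorm_le_block_decomp[OF tail] show ?thesis
    by (blast intro: le_less_trans)
qed

theorem proposition4p3:
  fixes n :: nat and p s :: "nat \<Rightarrow> ennreal" and \<alpha> :: ennreal
  assumes "n \<ge> 1"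
    and "\<forall>i<n. 1 \<le> p i" and "\<forall>i<n. 1 \<le> s i"
    and "(\<Sum>i<n. inverse (s i)) / of_nat n \<le> inverse \<alpha>"
    and "inverse \<alpha> \<le> (\<Sum>i<n. inverse (p i)) / of_nat n"
  defines "A \<equiv> amalgam n (conj_exp \<circ> p) (conj_exp \<circ> s)"
    and "H \<equiv> Hspace n (conj_exp \<circ> p) (conj_exp \<circ> s) (conj_exp \<alpha>)"
  shows "A \<subseteq> H
    \<and> (\<lambda>_. 0) \<in> A \<and> (\<forall>f\<in>A. \<forall>g\<in>A. (\<lambda>x. f x + g x) \<in> A)
    \<and> (\<forall>f\<in>A. \<forall>c::complex. (\<lambda>x. c * f x) \<in> A)
    \<and> (\<forall>f\<in>H. \<forall>\<epsilon>>0. \<exists>g\<in>A. (\<lambda>x. f x - g x) \<in> H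
          \<and> Hnorm n (conj_exp \<circ> p) (conj_exp \<circ> s) (conj_exp \<alpha>) (\<lambda>x. f x - g x) < \<epsilon>)"
proof -
  have p': "\<forall>i<n. 1 \<le> (conj_exp \<circ> p) i" and s': "\<forall>i<n. 1 \<le> (conj_exp \<circ> s) i"
    by (simp_all add: conj_exp_ge_1)
  show ?thesis
    unfolding A_def H_def
    using amalgam_subset_Hspace[OF p' s'] zero_in_amalgam amalgam_add[OF p' s'] amalgam_cmult[OF p' s']
      Hspace_approx_by_amalgam[OF p' s']
    by blast
qed

end
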